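(* Let $Q=\langle A_k,s_i:k<n,i<m\rangle$ (with $n$ minimal). Then there is an $\mathscr{L}_{\omega\omega}(Q)$-formula $\chi(x,y)$, with $x,y$ $d$-tuples of variables, such that for all $a,b\in\mathbb{N}^d$: $\mathbb{N}\models\chi(a,b)$ if and only if $a,b\in A_k$ for some $k<n$.
   Context: For $A\subseteq\mathbb{N}^d$ let $Q_A=\{X\subseteq\mathbb{N}^d:A\subseteq X\}$, $Q_A^{1}=Q_A$ and $Q_A^{-1}$ the complement of $Q_A$ in the power set of $\mathbb{N}^d$. The notation $Q=\langle A_k,s_i:k<n,i<m\rangle$ means: $\langle A_k:k<n\rangle$ is a partition of $\mathbb{N}^d$ for some $d<\omega$, $s_i\in\{1,-1\}^n$ for $i<m$, $Q=\bigcup_{i<m}\bigcap_{k<n}Q_{A_k}^{s_i(k)}$, and $n$ is minimal among all such representations of $Q$. $Q$ is a quantifier of type $\langle d\rangle$ on $\mathbb{N}$. $\mathscr{L}_{\omega\omega}(Q)$ is first-order logic extended by formulas $Qx\,\varphi(x,y)$ ($x$ a $d$-tuple of variables) with $\mathbb{N}\models Qx\,\varphi(x,b)$ iff $\{a\in\mathbb{N}^d:\mathbb{N}\models\varphi(a,b)\}\in Q$; formulas have no non-logical symbols besides $Q$. *)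

theory Defs
  imports Main
begin

text \<open>Elements of N^d are represented as lists of naturals of length d.\<close>
definition tuples :: "nat \<Rightarrow> nat list set" where
  "tuples d = {a. length a = d}"

text \<open>Q_A = {X \<subseteq> N^d. A \<subseteq> X}; Q_A^1 = Q_A, Q_A^{-1} = complement in Pow(N^d).
  A sign is encoded as a bool: True for 1, False for -1.\<close>
definition QA :: "nat \<Rightarrow> nat list set \<Rightarrow> nat list set set" where
  "QA d A = {X. X \<subseteq> tuples d \<and> A \<subseteq> X}"

definition QAs :: "nat \<Rightarrow> nat list set \<Rightarrow> bool \<Rightarrow> nat list set set" where
  "QAs d A s = (if s then QA d A else Pow (tuples d) - QA d A)"

definition is_partition :: "nat \<Rightarrow> nat \<Rightarrow> (nat \<Rightarrow> nat list set) \<Rightarrow> bool" where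
  "is_partition d n A \<longleftrightarrow>
     (\<forall>k<n. A k \<noteq> {}) \<and> (\<forall>k<n. \<forall>l<n. k \<noteq> l \<longrightarrow> A k \<inter> A l = {}) \<and>
     (\<Union>k<n. A k) = tuples d"

text \<open>Q is represented by the partition <A_k : k<n> of N^d and sign vectors s_i (i<m).\<close>
definition represents ::
  "nat \<Rightarrow> nat list set set \<Rightarrow> nat \<Rightarrow> nat \<Rightarrow> (nat \<Rightarrow> nat list set) \<Rightarrow> (nat \<Rightarrow> nat \<Rightarrow> bool) \<Rightarrow> bool" where
  "represents d Q n m A s \<longleftrightarrow>
     is_partition d n A \<and> Q = (\<Union>i<m. Pow (tuples d) \<inter> (\<Inter>k<n. QAs d (A k) (s i k)))"

definition min_represents ::
  "nat \<Rightarrow> nat list set set \<Rightarrow> nat \<Rightarrow> nat \<Rightarrow> (nat \<Rightarrow> nat list set) \<Rightarrow> (nat \<Rightarrow> nat \<Rightarrow> bool) \<Rightarrow> bool" where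
  "min_represents d Q n m A s \<longleftrightarrow>
     represents d Q n m A s \<and> (\<forall>n' m' B t. represents d Q n' m' B t \<longrightarrow> n \<le> n')"

text \<open>Formulas of L_{omega omega}(Q) with no non-logical symbols (variables are naturals).\<close>
datatype fm = Eq nat nat | Neg fm | Conj fm fm | Ex nat fm | Qu "nat list" fm

fun fv :: "fm \<Rightarrow> nat set" where
  "fv (Eq x y) = {x, y}"
| "fv (Neg p) = fv p"
| "fv (Conj p q) = fv p \<union> fv q"
| "fv (Ex x p) = fv p - {x}"
| "fv (Qu xs p) = fv p - set xs"

fun wf :: "nat \<Rightarrow> fm \<Rightarrow> bool" where
  "wf d (Eq x y) = True"
| "wf d (Neg p) = wf d p"
| "wf d (Conj p q) = (wf d p \<and> wf d q)"
| "wf d (Ex x p) = wf d p"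
| "wf d (Qu xs p) = (length xs = d \<and> distinct xs \<and> wf d p)"

fun upds :: "(nat \<Rightarrow> nat) \<Rightarrow> nat list \<Rightarrow> nat list \<Rightarrow> (nat \<Rightarrow> nat)" where
  "upds e (x # xs) (a # as) = upds (e(x := a)) xs as"
| "upds e _ _ = e"

fun sat :: "nat list set set \<Rightarrow> (nat \<Rightarrow> nat) \<Rightarrow> fm \<Rightarrow> bool" where
  "sat Q e (Eq x y) = (e x = e y)"
| "sat Q e (Neg p) = (\<not> sat Q e p)"
| "sat Q e (Conj p q) = (sat Q e p \<and> sat Q e q)"
| "sat Q e (Ex x p) = (\<exists>a. sat Q (e(x := a)) p)"
| "sat Q e (Qu xs p) = ({a \<in> tuples (length xs). sat Q (upds e xs a) p} \<in> Q)"

end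

theory Submission
  imports Defs
begin

(* Let Q be represented by the partition A_0, ..., A_(n-1) of N^d with n minimal.  The formula

     chi(x, y) = (\<forall>z_0 ... z_(n-1). Q w (w \<notin> {x, z_0, ..., z_(n-1)}) \<longleftrightarrow> Q w (w \<notin> {y, z_0, ..., z_(n-1)}))
                 \<and> (Q w (w \<noteq> x) \<longleftrightarrow> Q w (w \<noteq> y))

   says that Q cannot distinguish a from b when at most n further tuples are removed from N^d
   (indist).  If a and b lie in the same block, removing either covers the same blocks, so they
   are indistinguishable.  Conversely, if a \<in> A_k and b \<in> A_j with k \<noteq> j are indistinguishable,
   then removing a representative of every block outside a given index set S shows that the
   predicate defining Q cannot tell S - {k} from S - {j}; hence Q is already determined by the
   partition in which A_k and A_j are merged, contradicting the minimality of n. *)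

(* The blocks of A among the first n that are entirely contained in X.  For a quantifier
   represented over A, membership of X in Q depends only on this set of indices. *)
definition covered :: "nat \<Rightarrow> (nat \<Rightarrow> nat list set) \<Rightarrow> nat list set \<Rightarrow> nat set" where
  "covered n A X = {l. l < n \<and> A l \<subseteq> X}"

(* Q is determined by the block family A: membership of X \<subseteq> N^d in Q is a function of
   covered n A X alone.  For a partition this is equivalent to representability (below). *)
definition determines :: "nat \<Rightarrow> nat list set set \<Rightarrow> nat \<Rightarrow> (nat \<Rightarrow> nat list set) \<Rightarrow> bool" where
  "determines d Q n A \<longleftrightarrow> (\<exists>P. \<forall>X. X \<in> Q \<longleftrightarrow> X \<subseteq> tuples d \<and> P (covered n A X))"

lemma QAs_iff: "X \<in> QAs d B b \<longleftrightarrow> X \<subseteq> tuples d \<and> (b \<longleftrightarrow> B \<subseteq> X)"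
  by (auto simp: QAs_def QA_def)

lemma represents_iff:
  "represents d Q n m A s \<longleftrightarrow> is_partition d n A \<and>
     (\<forall>X. X \<in> Q \<longleftrightarrow> X \<subseteq> tuples d \<and> (\<exists>i<m. \<forall>l<n. s i l \<longleftrightarrow> l \<in> covered n A X))"
proof -
  have "X \<in> (\<Union>i<m. Pow (tuples d) \<inter> (\<Inter>k<n. QAs d (A k) (s i k))) \<longleftrightarrow>
        X \<subseteq> tuples d \<and> (\<exists>i<m. \<forall>l<n. s i l \<longleftrightarrow> l \<in> covered n A X)" for X
    unfolding Int_iff Pow_iff UN_iff INT_iff QAs_iff covered_def lessThan_iff by auto
  then show ?thesis by (simp only: represents_def set_eq_iff)
qed

lemma represents_determines: "represents d Q n m A s \<Longrightarrow> determines d Q n A"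
  unfolding represents_iff determines_def
  by (intro exI[where x = "\<lambda>S. \<exists>i<m. \<forall>l<n. s i l \<longleftrightarrow> l \<in> S"]) (simp only: simp_thms)

(* Conversely, any quantifier determined by a partition is represented over it: take one sign
   vector for each (of the finitely many) admissible sets of covered blocks. *)
lemma determines_represents:
  assumes part: "is_partition d n B" and det: "determines d Q n B"
  shows "\<exists>m t. represents d Q n m B t"
proof -
  obtain G where G: "\<And>X. X \<in> Q \<longleftrightarrow> X \<subseteq> tuples d \<and> G (covered n B X)"
    using det by (auto simp: determines_def)
  obtain L where L: "set L = {S. S \<subseteq> {..<n} \<and> G S}"
    using finite_list[of "{S. S \<subseteq> {..<n} \<and> G S}"] by auto
  define t where "t i l \<longleftrightarrow> l \<in> L ! i" for i l
  have "(\<exists>i<length L. \<forall>l<n. t i l \<longleftrightarrow> l \<in> covered n B X) \<longleftrightarrow> G (covered n B X)" for X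
  proof
    assume "\<exists>i<length L. \<forall>l<n. t i l \<longleftrightarrow> l \<in> covered n B X"
    then obtain i where i: "i < length L" "\<forall>l<n. l \<in> L ! i \<longleftrightarrow> l \<in> covered n B X"
      by (auto simp: t_def)
    have "L ! i \<in> set L" using i(1) by simp
    then have "L ! i \<subseteq> {..<n}" "G (L ! i)" using L by auto
    moreover have "covered n B X \<subseteq> {..<n}" by (auto simp: covered_def)
    ultimately show "G (covered n B X)" using i(2) by (metis subsetD subsetI subset_antisym lessThan_iff)
  next
    assume "G (covered n B X)"
    then have "covered n B X \<in> set L" using L by (auto simp: covered_def)
    then obtain i where "i < length L" "L ! i = covered n B X" by (metis in_set_conv_nth)
    then show "\<exists>i<length L. \<forall>l<n. t i l \<longleftrightarrow> l \<in> covered n B X" by (auto simp: t_def)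
  qed
  then have "represents d Q n (length L) B t"
    using part G by (simp add: represents_iff)
  then show ?thesis by blast
qed

lemma partition_unique:
  "is_partition d n A \<Longrightarrow> k < n \<Longrightarrow> l < n \<Longrightarrow> x \<in> A k \<Longrightarrow> x \<in> A l \<Longrightarrow> k = l"
  unfolding is_partition_def by blast

lemma partition_block_subset: "is_partition d n A \<Longrightarrow> l < n \<Longrightarrow> A l \<subseteq> tuples d"
  unfolding is_partition_def by blast

lemma partition_covers: "is_partition d n A \<Longrightarrow> x \<in> tuples d \<Longrightarrow> \<exists>k<n. x \<in> A k"
  unfolding is_partition_def by blast

lemma coarsen_partition:
  assumes part: "is_partition d n A" and onto: "\<sigma> ` {..<n} = {..<n'}"
  shows "is_partition d n' (\<lambda>k. \<Union>l\<in>{l. l < n \<and> \<sigma> l = k}. A l)"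
  unfolding is_partition_def
proof (intro conjI allI impI)
  fix k assume "k < n'"
  then obtain l where "l < n" "\<sigma> l = k" using onto by (metis imageE lessThan_iff)
  then show "(\<Union>l\<in>{l. l < n \<and> \<sigma> l = k}. A l) \<noteq> {}"
    using part by (auto simp: is_partition_def)
next
  fix k k' assume "k < n'" "k' < n'" "k \<noteq> k'"
  then show "(\<Union>l\<in>{l. l < n \<and> \<sigma> l = k}. A l) \<inter> (\<Union>l\<in>{l. l < n \<and> \<sigma> l = k'}. A l) = {}"
    using partition_unique[OF part] by blast
next
  have "(\<Union>k<n'. \<Union>l\<in>{l. l < n \<and> \<sigma> l = k}. A l) = (\<Union>l<n. A l)"
    using onto by blast
  then show "(\<Union>k<n'. \<Union>l\<in>{l. l < n \<and> \<sigma> l = k}. A l) = tuples d"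
    using part by (simp add: is_partition_def)
qed

lemma covered_coarsen:
  "k \<in> covered n' (\<lambda>k. \<Union>l\<in>{l. l < n \<and> \<sigma> l = k}. A l) X \<longleftrightarrow>
     k < n' \<and> (\<forall>l<n. \<sigma> l = k \<longrightarrow> l \<in> covered n A X)"
  by (auto simp: covered_def)

lemma determines_coarsen:
  assumes det: "\<And>X. X \<in> Q \<longleftrightarrow> X \<subseteq> tuples d \<and> P (covered n A X)"
    and resp: "\<And>X Y. covered n' B X = covered n' B Y \<Longrightarrow> P (covered n A X) \<longleftrightarrow> P (covered n A Y)"
  shows "determines d Q n' B"
proof -
  define G where "G S \<longleftrightarrow> (\<exists>Y. covered n' B Y = S \<and> P (covered n A Y))" for S
  have "X \<in> Q \<longleftrightarrow> X \<subseteq> tuples d \<and> G (covered n' B X)" for X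
  proof
    assume "X \<in> Q"
    then show "X \<subseteq> tuples d \<and> G (covered n' B X)" using det by (auto simp: G_def)
  next
    assume X: "X \<subseteq> tuples d \<and> G (covered n' B X)"
    then obtain Y where "covered n' B Y = covered n' B X" "P (covered n A Y)" by (auto simp: G_def)
    then show "X \<in> Q" using X det resp by metis
  qed
  then show ?thesis by (auto simp: determines_def)
qed

definition merge_index :: "nat \<Rightarrow> nat \<Rightarrow> nat \<Rightarrow> nat" where
  "merge_index p q l = (if l = q then p else if q < l then l - 1 else l)"

lemma merge_index_onto: "p < q \<Longrightarrow> q < n \<Longrightarrow> merge_index p q ` {..<n} = {..<n - 1}"
proof (intro equalityI subsetI)
  fix k assume "p < q" "q < n" "k \<in> {..<n - 1}"
  then have "k = merge_index p q (if k < q then k else k + 1)" "(if k < q then k else k + 1) < n"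
    by (auto simp: merge_index_def)
  then show "k \<in> merge_index p q ` {..<n}" by blast
qed (auto simp: merge_index_def)

lemma merge_index_fibre_p: "p < q \<Longrightarrow> merge_index p q l = p \<longleftrightarrow> l = p \<or> l = q"
  by (auto simp: merge_index_def)

lemma merge_index_inj: "p < q \<Longrightarrow> l \<notin> {p, q} \<Longrightarrow> merge_index p q l' = merge_index p q l \<longleftrightarrow> l' = l"
  by (auto simp: merge_index_def)

lemma pred_determined_off_pair:
  assumes swap: "\<And>S. S \<subseteq> U \<Longrightarrow> P (S - {p}) \<longleftrightarrow> P (S - {q})"
    and S: "S1 \<subseteq> U" "S2 \<subseteq> U" "S1 - {p, q} = S2 - {p, q}"
    and both: "p \<in> S1 \<and> q \<in> S1 \<longleftrightarrow> p \<in> S2 \<and> q \<in> S2"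
  shows "P S1 \<longleftrightarrow> P S2"
proof (cases "p \<in> S1 \<and> q \<in> S1")
  case True
  then have "S1 = S2" using S(3) both by blast
  then show ?thesis by simp
next
  case False
  have drop_pair: "P S \<longleftrightarrow> P (S - {p, q})" if "S \<subseteq> U" "\<not> (p \<in> S \<and> q \<in> S)" for S
  proof (cases "p \<in> S")
    case True
    then have "S - {q} = S" "S - {p} = S - {p, q}" using that(2) by auto
    then show ?thesis using swap[OF that(1)] by simp
  next
    case False
    then have "S - {p} = S" "S - {q} = S - {p, q}" by auto
    then show ?thesis using swap[OF that(1)] by simp
  qed
  show ?thesis using drop_pair[OF S(1) False] drop_pair[OF S(2)] False both S(3) by simp
qed

lemma merge_blocks:
  assumes part: "is_partition d n A"
    and det: "\<And>X. X \<in> Q \<longleftrightarrow> X \<subseteq> tuples d \<and> P (covered n A X)"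
    and pq: "p < q" "q < n"
    and swap: "\<And>S. S \<subseteq> {..<n} \<Longrightarrow> P (S - {p}) \<longleftrightarrow> P (S - {q})"
  shows "\<exists>B. is_partition d (n - 1) B \<and> determines d Q (n - 1) B"
proof -
  let ?\<sigma> = "merge_index p q"
  define B where "B = (\<lambda>k. \<Union>l\<in>{l. l < n \<and> ?\<sigma> l = k}. A l)"
  have onto: "?\<sigma> ` {..<n} = {..<n - 1}" using merge_index_onto[OF pq] .
  have partB: "is_partition d (n - 1) B"
    unfolding B_def using coarsen_partition[OF part onto] .
  have off_pair: "l \<in> covered n A X \<longleftrightarrow> ?\<sigma> l \<in> covered (n - 1) B X"
    if "l < n" "l \<notin> {p, q}" for l X
  proof -
    have "?\<sigma> l < n - 1" using onto that(1) by blast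
    then show ?thesis
      unfolding B_def covered_coarsen using merge_index_inj[OF pq(1) that(2)] that(1) by auto
  qed
  have pair: "p \<in> covered (n - 1) B X \<longleftrightarrow> p \<in> covered n A X \<and> q \<in> covered n A X" for X
  proof -
    have "p < n - 1" "p < n" using pq by auto
    then show ?thesis
      unfolding B_def covered_coarsen merge_index_fibre_p[OF pq(1)] using pq(2) by blast
  qed
  have "P (covered n A X) \<longleftrightarrow> P (covered n A Y)"
    if same: "covered (n - 1) B X = covered (n - 1) B Y" for X Y
  proof (rule pred_determined_off_pair[OF swap])
    show "covered n A X \<subseteq> {..<n}" "covered n A Y \<subseteq> {..<n}" by (auto simp: covered_def)
    have "l \<in> covered n A X - {p, q} \<longleftrightarrow> l \<in> covered n A Y - {p, q}" for l
    proof (cases "l < n \<and> l \<notin> {p, q}")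
      case True
      then show ?thesis using off_pair[of l X] off_pair[of l Y] same by simp
    next
      case False
      then show ?thesis by (auto simp: covered_def)
    qed
    then show "covered n A X - {p, q} = covered n A Y - {p, q}" by blast
    show "p \<in> covered n A X \<and> q \<in> covered n A X \<longleftrightarrow> p \<in> covered n A Y \<and> q \<in> covered n A Y"
      using pair[of X] pair[of Y] same by simp
  qed
  then have "determines d Q (n - 1) B" by (rule determines_coarsen[OF det])
  with partB show ?thesis by blast
qed

(* The semantic content of the formula chi: Q cannot distinguish a from b, in the sense that
   removing a resp. b, together with any set T of at most n tuples, from N^d gives sets that are
   both in Q or both outside Q. *)
definition indist :: "nat list set set \<Rightarrow> nat \<Rightarrow> nat \<Rightarrow> nat list \<Rightarrow> nat list \<Rightarrow> bool" where
  "indist Q d n a b \<longleftrightarrow>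
     (\<forall>T. T \<subseteq> tuples d \<and> finite T \<and> card T \<le> n \<longrightarrow>
          (tuples d - insert a T \<in> Q \<longleftrightarrow> tuples d - insert b T \<in> Q))"

lemma covered_avoid:
  assumes part: "is_partition d n A" and k: "k < n" "a \<in> A k"
  shows "covered n A (tuples d - insert a T) = {l. l < n \<and> l \<noteq> k \<and> A l \<inter> T = {}}"
proof -
  have "A l \<subseteq> tuples d - insert a T \<longleftrightarrow> l \<noteq> k \<and> A l \<inter> T = {}" if "l < n" for l
  proof -
    have "a \<in> A l \<longleftrightarrow> l = k" using partition_unique[OF part that k(1)] k(2) by blast
    then show ?thesis using partition_block_subset[OF part that] by blast
  qed
  then show ?thesis by (auto simp: covered_def)
qed

(* Tuples in the same block are indistinguishable: both removals cover the same blocks. *)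
lemma same_block_indist:
  assumes part: "is_partition d n A" and det: "determines d Q n A"
    and k: "k < n" "a \<in> A k" "b \<in> A k"
  shows "indist Q d n a b"
proof -
  obtain P where P: "\<And>X. X \<in> Q \<longleftrightarrow> X \<subseteq> tuples d \<and> P (covered n A X)"
    using det by (auto simp: determines_def)
  have "covered n A (tuples d - insert a T) = covered n A (tuples d - insert b T)" for T
    using covered_avoid[OF part k(1,2)] covered_avoid[OF part k(1,3)] by simp
  then show ?thesis by (simp add: indist_def P)
qed

(* Indistinguishable tuples from blocks k and j make k and j interchangeable for P: to realise
   S - {k} as a covered set, remove one representative from every block outside S. *)
lemma indist_block_swap:
  assumes part: "is_partition d n A"
    and det: "\<And>X. X \<in> Q \<longleftrightarrow> X \<subseteq> tuples d \<and> P (covered n A X)"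
    and a: "k < n" "a \<in> A k" and b: "j < n" "b \<in> A j"
    and ind: "indist Q d n a b" and S: "S \<subseteq> {..<n}"
  shows "P (S - {k}) \<longleftrightarrow> P (S - {j})"
proof -
  define r where "r l = (SOME x. x \<in> A l)" for l
  have r: "r l \<in> A l" if "l < n" for l
    using part that unfolding is_partition_def r_def by (metis ex_in_conv someI)
  define T where "T = r ` ({..<n} - S)"
  have "T \<subseteq> tuples d" using r partition_block_subset[OF part] by (auto simp: T_def)
  moreover have "card T \<le> n"
    using card_image_le[of "{..<n} - S" r] card_mono[of "{..<n}" "{..<n} - S"] by (simp add: T_def)
  ultimately have small: "T \<subseteq> tuples d \<and> finite T \<and> card T \<le> n" by (simp add: T_def)
  have "A l \<inter> T = {} \<longleftrightarrow> l \<in> S" if "l < n" for l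
    using r that partition_unique[OF part _ that] by (fastforce simp: T_def)
  then have cov: "covered n A (tuples d - insert c T) = S - {i}" if "i < n" "c \<in> A i" for c i
    using covered_avoid[OF part that] S by auto
  have "tuples d - insert a T \<in> Q \<longleftrightarrow> tuples d - insert b T \<in> Q"
    using ind small by (simp add: indist_def)
  then show ?thesis by (simp add: det cov[OF a] cov[OF b])
qed

(* The combinatorial core of the theorem: with n minimal, indistinguishability is exactly
   membership in a common block, since otherwise the two blocks could be merged. *)
lemma indist_iff_same_block:
  assumes part: "is_partition d n A" and det: "determines d Q n A"
    and minimal: "\<And>n' B. is_partition d n' B \<Longrightarrow> determines d Q n' B \<Longrightarrow> n \<le> n'"
    and a: "a \<in> tuples d" and b: "b \<in> tuples d"
  shows "indist Q d n a b \<longleftrightarrow> (\<exists>k<n. a \<in> A k \<and> b \<in> A k)"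
proof
  assume ind: "indist Q d n a b"
  obtain P where P: "\<And>X. X \<in> Q \<longleftrightarrow> X \<subseteq> tuples d \<and> P (covered n A X)"
    using det by (auto simp: determines_def)
  obtain k j where k: "k < n" "a \<in> A k" and j: "j < n" "b \<in> A j"
    using partition_covers[OF part a] partition_covers[OF part b] by blast
  have swap: "P (S - {k}) \<longleftrightarrow> P (S - {j})" if "S \<subseteq> {..<n}" for S
    using indist_block_swap[OF part P k j ind that] .
  have "k = j"
  proof (rule ccontr)
    assume "k \<noteq> j"
    then obtain p q where pq: "p < q" "q < n" and "\<And>S. S \<subseteq> {..<n} \<Longrightarrow> P (S - {p}) \<longleftrightarrow> P (S - {q})"
      using swap k(1) j(1) by (metis linorder_neqE_nat)
    then obtain B where "is_partition d (n - 1) B" "determines d Q (n - 1) B"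
      using merge_blocks[OF part P pq] by blast
    then have "n \<le> n - 1" by (rule minimal)
    with k(1) show False by simp
  qed
  then show "\<exists>k<n. a \<in> A k \<and> b \<in> A k" using k j by blast
next
  assume "\<exists>k<n. a \<in> A k \<and> b \<in> A k"
  then show "indist Q d n a b" using same_block_indist[OF part det] by blast
qed

definition TT :: fm where "TT = Neg (Ex 0 (Neg (Eq 0 0)))"

lemma sat_TT [simp]: "sat Q e TT" and fv_TT [simp]: "fv TT = {}" and wf_TT [simp]: "wf d TT"
  by (simp_all add: TT_def)

fun eqt :: "nat list \<Rightarrow> nat list \<Rightarrow> fm" where
  "eqt (u # us) (v # vs) = Conj (Eq u v) (eqt us vs)"
| "eqt _ _ = TT"

lemma sat_eqt: "length us = length vs \<Longrightarrow> sat Q e (eqt us vs) \<longleftrightarrow> map e us = map e vs"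
  by (induction us vs rule: eqt.induct) auto

lemma fv_eqt: "fv (eqt us vs) \<subseteq> set us \<union> set vs"
  by (induction us vs rule: eqt.induct) auto

lemma wf_eqt [simp]: "wf d (eqt us vs)"
  by (induction us vs rule: eqt.induct) auto

fun conjs :: "fm list \<Rightarrow> fm" where
  "conjs [] = TT"
| "conjs (p # ps) = Conj p (conjs ps)"

lemma sat_conjs: "sat Q e (conjs ps) \<longleftrightarrow> (\<forall>p\<in>set ps. sat Q e p)"
  and fv_conjs: "fv (conjs ps) = (\<Union>p\<in>set ps. fv p)"
  and wf_conjs: "wf d (conjs ps) \<longleftrightarrow> (\<forall>p\<in>set ps. wf d p)"
  by (induction ps) auto

definition Forall :: "nat list \<Rightarrow> fm \<Rightarrow> fm" where
  "Forall vs p = Neg (foldr Ex vs (Neg p))"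

lemma sat_foldr_Ex:
  "sat Q e (foldr Ex vs p) \<longleftrightarrow> (\<exists>as. length as = length vs \<and> sat Q (upds e vs as) p)"
  by (induction vs arbitrary: e) (fastforce simp: length_Suc_conv)+

lemma sat_Forall:
  "sat Q e (Forall vs p) \<longleftrightarrow> (\<forall>as. length as = length vs \<longrightarrow> sat Q (upds e vs as) p)"
  by (auto simp: Forall_def sat_foldr_Ex)

lemma fv_Forall [simp]: "fv (Forall vs p) = fv p - set vs"
  and wf_Forall [simp]: "wf d (Forall vs p) = wf d p"
  by (induction vs) (auto simp: Forall_def)

definition Iff :: "fm \<Rightarrow> fm \<Rightarrow> fm" where
  "Iff p q = Conj (Neg (Conj p (Neg q))) (Neg (Conj q (Neg p)))"

lemma sat_Iff [simp]: "sat Q e (Iff p q) \<longleftrightarrow> (sat Q e p \<longleftrightarrow> sat Q e q)"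
  and fv_Iff [simp]: "fv (Iff p q) = fv p \<union> fv q"
  and wf_Iff [simp]: "wf d (Iff p q) = (wf d p \<and> wf d q)"
  by (auto simp: Iff_def)

lemma upds_notin: "v \<notin> set vs \<Longrightarrow> upds e vs as v = e v"
  by (induction e vs as rule: upds.induct) auto

lemma map_upds_disj: "set vs \<inter> set us = {} \<Longrightarrow> map (upds e vs as) us = map e us"
  by (induction us) (auto simp: upds_notin)

lemma map_upds_self: "distinct vs \<Longrightarrow> length vs = length as \<Longrightarrow> map (upds e vs as) vs = as"
  by (induction e vs as rule: upds.induct) (auto simp: upds_notin)

lemma upds_append:
  "length vs = length as \<Longrightarrow> upds e (vs @ vs') (as @ as') = upds (upds e vs as) vs' as'"
  by (induction e vs as rule: upds.induct) auto

lemma map_upds_concat: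
  assumes "list_all2 (\<lambda>vs t. length vs = length t) vss ts" and "distinct (concat vss)"
  shows "map (map (upds e (concat vss) (concat ts))) vss = ts"
  using assms
proof (induction vss ts arbitrary: e rule: list_all2_induct)
  case Nil
  then show ?case by simp
next
  case (Cons vs vss t ts)
  have "upds e (concat (vs # vss)) (concat (t # ts)) = upds (upds e vs t) (concat vss) (concat ts)"
    using Cons.hyps by (simp add: upds_append)
  with Cons show ?case
    by (simp add: map_upds_disj map_upds_self inf_commute)
qed

(* Variable layout of chi: x and y are the free d-tuples, w is bound by Q, and z_0, ..., z_(n-1)
   are n universally quantified d-tuples; all these blocks are pairwise disjoint. *)
definition xvars :: "nat \<Rightarrow> nat list" where "xvars d = [0..<d]"

definition yvars :: "nat \<Rightarrow> nat list" where "yvars d = [d..<2*d]"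

definition wvars :: "nat \<Rightarrow> nat list" where "wvars d = [2*d..<3*d]"

definition zvars :: "nat \<Rightarrow> nat \<Rightarrow> nat list list" where
  "zvars d n = map (\<lambda>i. [(3+i)*d..<(4+i)*d]) [0..<n]"

lemma concat_zvars: "concat (zvars d n) = [3*d..<(3+n)*d]"
proof (induction n)
  case 0
  then show ?case by (simp add: zvars_def)
next
  case (Suc n)
  have "[3*d..<(4+n)*d] = [3*d..<(3+n)*d] @ [(3+n)*d..<(4+n)*d]"
    using upt_add_eq_append[of "3*d" "(3+n)*d" d] by (simp add: algebra_simps)
  with Suc show ?case by (simp add: zvars_def)
qed

lemma zvars_props: "u \<in> set (zvars d n) \<Longrightarrow> length u = d \<and> set u \<inter> set (wvars d) = {}"
  by (auto simp: zvars_def wvars_def algebra_simps)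

definition avoid_fm :: "nat \<Rightarrow> nat list list \<Rightarrow> fm" where
  "avoid_fm d us = Qu (wvars d) (conjs (map (\<lambda>u. Neg (eqt (wvars d) u)) us))"

lemma sat_avoid_fm:
  assumes "\<forall>u\<in>set us. length u = d \<and> set u \<inter> set (wvars d) = {}"
  shows "sat Q E (avoid_fm d us) \<longleftrightarrow> tuples d - set (map (map E) us) \<in> Q"
proof -
  have "sat Q (upds E (wvars d) c) (conjs (map (\<lambda>u. Neg (eqt (wvars d) u)) us))
          \<longleftrightarrow> c \<notin> set (map (map E) us)" if "length c = d" for c
    using assms that
    by (auto simp: sat_conjs sat_eqt wvars_def map_upds_self map_upds_disj inf_commute)
  then have "{c \<in> tuples (length (wvars d)).
                sat Q (upds E (wvars d) c) (conjs (map (\<lambda>u. Neg (eqt (wvars d) u)) us))}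
             = tuples d - set (map (map E) us)"
    by (auto simp: tuples_def wvars_def)
  then show ?thesis by (simp add: avoid_fm_def)
qed

definition chi :: "nat \<Rightarrow> nat \<Rightarrow> fm" where
  "chi d n =
     Conj (Forall (concat (zvars d n))
             (Iff (avoid_fm d (xvars d # zvars d n)) (avoid_fm d (yvars d # zvars d n))))
          (Iff (avoid_fm d [xvars d]) (avoid_fm d [yvars d]))"

lemma wf_chi: "wf d (chi d n)"
  by (simp add: chi_def avoid_fm_def wf_conjs wvars_def)

lemma fv_avoid_fm: "fv (avoid_fm d us) \<subseteq> \<Union>(set ` set us)"
  using fv_eqt by (fastforce simp: avoid_fm_def fv_conjs)

lemma fv_chi: "fv (chi d n) \<subseteq> set (xvars d) \<union> set (yvars d)"
  using fv_avoid_fm[of d] by (fastforce simp: chi_def)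

(* The sets of at most n tuples are the empty set and the value sets of n-tuples of tuples;
   the second conjunct of chi handles the empty set. *)
lemma small_set_as_list:
  assumes "finite T" "T \<noteq> {}" "card T \<le> n"
  shows "\<exists>ts. length ts = n \<and> set ts = T"
proof -
  obtain xs where xs: "set xs = T" "distinct xs" using finite_distinct_list[OF assms(1)] by blast
  then have "length xs \<le> n" "xs \<noteq> []" using assms by (auto simp: distinct_card[symmetric])
  then show ?thesis
    using xs by (intro exI[of _ "xs @ replicate (n - length xs) (hd xs)"]) auto
qed

lemma small_set_cases:
  "T \<subseteq> tuples d \<and> finite T \<and> card T \<le> n \<longleftrightarrow>
     T = {} \<or> (\<exists>ts. length ts = n \<and> set ts \<subseteq> tuples d \<and> set ts = T)"
  using small_set_as_list[of T n] card_length by fastforce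

lemma realize_zvars:
  "(\<exists>Z. T = set (map (map (upds E (concat (zvars d n)) Z)) (zvars d n)) \<and>
        length Z = length (concat (zvars d n)))
   \<longleftrightarrow> (\<exists>ts. length ts = n \<and> set ts \<subseteq> tuples d \<and> set ts = T)"
proof
  assume "\<exists>Z. T = set (map (map (upds E (concat (zvars d n)) Z)) (zvars d n)) \<and>
               length Z = length (concat (zvars d n))"
  then obtain Z where "T = set (map (map (upds E (concat (zvars d n)) Z)) (zvars d n))" by blast
  moreover have "set (map (map (upds E (concat (zvars d n)) Z)) (zvars d n)) \<subseteq> tuples d"
    using zvars_props by (auto simp: tuples_def)
  moreover have "length (map (map (upds E (concat (zvars d n)) Z)) (zvars d n)) = n"
    by (simp add: zvars_def)
  ultimately show "\<exists>ts. length ts = n \<and> set ts \<subseteq> tuples d \<and> set ts = T"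
    by blast
next
  assume "\<exists>ts. length ts = n \<and> set ts \<subseteq> tuples d \<and> set ts = T"
  then obtain ts where ts: "length ts = n" "set ts \<subseteq> tuples d" "set ts = T" by blast
  have lengths: "list_all2 (\<lambda>vs t. length vs = length t) (zvars d n) ts"
    using ts(1,2) by (force simp: list_all2_conv_all_nth zvars_def tuples_def algebra_simps)
  then have "map (map (upds E (concat (zvars d n)) (concat ts))) (zvars d n) = ts"
    by (rule map_upds_concat) (simp add: concat_zvars)
  moreover have "length (concat ts) = length (concat (zvars d n))"
    using lengths by (induction rule: list_all2_induct) auto
  ultimately show "\<exists>Z. T = set (map (map (upds E (concat (zvars d n)) Z)) (zvars d n)) \<and>
                     length Z = length (concat (zvars d n))"
    using ts(3) by metis
qed

lemma sat_chi:
  assumes a: "a \<in> tuples d" and b: "b \<in> tuples d"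
  shows "sat Q (upds (upds e (xvars d) a) (yvars d) b) (chi d n) \<longleftrightarrow> indist Q d n a b"
proof -
  define E where "E = upds (upds e (xvars d) a) (yvars d) b"
  define same where "same T \<longleftrightarrow> (tuples d - insert a T \<in> Q \<longleftrightarrow> tuples d - insert b T \<in> Q)" for T
  let ?zz = "concat (zvars d n)"
  define blocks where "blocks Z = set (map (map (upds E ?zz Z)) (zvars d n))" for Z
  have "map E (xvars d) = a" "map E (yvars d) = b"
    using a b by (simp_all add: E_def tuples_def xvars_def yvars_def map_upds_disj map_upds_self)
  moreover have "map (upds E ?zz Z) (xvars d) = map E (xvars d)"
    "map (upds E ?zz Z) (yvars d) = map E (yvars d)" for Z
    by (simp_all add: concat_zvars xvars_def yvars_def map_upds_disj)
  moreover have "\<forall>u\<in>set (v # zs). length u = d \<and> set u \<inter> set (wvars d) = {}"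
    if "v = xvars d \<or> v = yvars d" "zs = [] \<or> zs = zvars d n" for v zs
    using that by (auto simp: xvars_def yvars_def wvars_def dest!: zvars_props)
  note avoid = sat_avoid_fm[OF this]
  ultimately have "sat Q E (chi d n) \<longleftrightarrow> (\<forall>Z. length Z = length ?zz \<longrightarrow> same (blocks Z)) \<and> same {}"
    unfolding chi_def sat.simps sat_Forall sat_Iff blocks_def same_def
    by (simp only: avoid simp_thms list.map list.set)
  also have "\<dots> \<longleftrightarrow> (\<forall>T. T \<subseteq> tuples d \<and> finite T \<and> card T \<le> n \<longrightarrow> same T)"
  proof -
    have range: "T \<subseteq> tuples d \<and> finite T \<and> card T \<le> n \<longleftrightarrow>
          T = {} \<or> (\<exists>Z. T = blocks Z \<and> length Z = length ?zz)" for T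
      by (simp only: blocks_def realize_zvars small_set_cases)
    show ?thesis unfolding range by blast
  qed
  finally show ?thesis by (simp add: E_def same_def indist_def)
qed

theorem lemma19:
  fixes d n m :: nat and Q :: "nat list set set"
    and A :: "nat \<Rightarrow> nat list set" and s :: "nat \<Rightarrow> nat \<Rightarrow> bool"
  assumes "min_represents d Q n m A s"
  shows "\<exists>\<chi> xs ys. wf d \<chi> \<and> length xs = d \<and> length ys = d \<and> distinct (xs @ ys) \<and>
           fv \<chi> \<subseteq> set xs \<union> set ys \<and>
           (\<forall>a\<in>tuples d. \<forall>b\<in>tuples d. \<forall>e.
              sat Q (upds (upds e xs a) ys b) \<chi> \<longleftrightarrow> (\<exists>k<n. a \<in> A k \<and> b \<in> A k))"
proof -
  have rep: "represents d Q n m A s"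
    and min_rep: "\<And>n' m' B t. represents d Q n' m' B t \<Longrightarrow> n \<le> n'"
    using assms by (auto simp: min_represents_def)
  have part: "is_partition d n A" using rep by (simp add: represents_iff)
  have det: "determines d Q n A" using represents_determines[OF rep] .
  have minimal: "n \<le> n'" if "is_partition d n' B" "determines d Q n' B" for n' B
    using determines_represents[OF that] min_rep by blast
  have "sat Q (upds (upds e (xvars d) a) (yvars d) b) (chi d n) \<longleftrightarrow> (\<exists>k<n. a \<in> A k \<and> b \<in> A k)"
    if "a \<in> tuples d" "b \<in> tuples d" for a b e
    using sat_chi[OF that] indist_iff_same_block[OF part det minimal that] by simp
  moreover have "length (xvars d) = d" "length (yvars d) = d" "distinct (xvars d @ yvars d)"
    by (auto simp: xvars_def yvars_def)
  ultimately show ?thesis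
    using wf_chi fv_chi by blast
qed

end
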